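(* In the setting below, assume each $f_i$ is $L_i$-smooth and there is $x_*$ with $F(x_* )=\inf F\in\mathbb R$. If $\eta_k\le\frac1{2n\sqrt{\bar LL^*}}$ for all $k\in[K]$, then for any $k\in[K]$, any permutation $\sigma_k$ and any $z\in\mathbb R^d$, $$\frac1n\sum_{i=1}^n\Big(B_{f_{\sigma_k^i}}(x_{k+1},x_k^i)-B_{f_{\sigma_k^i}}(z,x_k^i)\Big)\le\bar L\|x_{k+1}-x_k\|^2+8\eta_k^2n^2\bar L^2B_f(z,x_* )+4\eta_k^2R_k,$$ where $R_k=\sum_{i=2}^n\frac{L_{\sigma_k^i}}{n}\Big\|\sum_{j=1}^{i-1}\nabla f_{\sigma_k^j}(x_* )\Big\|^2$.
   Context: Setting. Let $n,d\in\mathbb N$, let $f_1,\dots,f_n:\mathbb R^d\to\mathbb R$ be convex, $f=\frac1n\sum_{i=1}^nf_i$, let $\psi:\mathbb R^d\to\mathbb R\cup\{+\infty\}$ be proper, closed and convex, and $F=f+\psi$. $B_g(x,y)=g(x)-g(y)-\langle\nabla g(y),x-y\rangle$ is the Bregman divergence. Proximal shuffling gradient method: given $x_1\in\mathrm{dom}\,\psi$, a number of epochs $K\ge2$ and stepsizes $\eta_k>0$, for $k=1,\dots,K$: choose a permutation $\sigma_k=(\sigma_k^1,\dots,\sigma_k^n)$ of $[n]=\{1,\dots,n\}$; set $x_k^1=x_k$ and $x_k^{i+1}=x_k^i-\eta_k\nabla f_{\sigma_k^i}(x_k^i)$ for $i=1,\dots,n$; set $x_{k+1}=\arg\min_{x\in\mathbb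 R^d}\{n\psi(x)+\frac{1}{2\eta_k}\|x-x_k^{n+1}\|^2\}$. Smoothness: each $f_i$ is differentiable with $\|\nabla f_i(x)-\nabla f_i(y)\|\le L_i\|x-y\|$ for all $x,y$, $L_i>0$; $\bar L=\frac1n\sum_iL_i$, $L^*=\max_iL_i$. *)

theory Defs
  imports "HOL-Analysis.Analysis"
begin

definition bregman :: "('a::real_inner \<Rightarrow> real) \<Rightarrow> ('a \<Rightarrow> 'a) \<Rightarrow> 'a \<Rightarrow> 'a \<Rightarrow> real" where
  "bregman g dg x y = g x - g y - inner (dg y) (x - y)"

definition proper_closed_convex :: "('a::real_normed_vector \<Rightarrow> ereal) \<Rightarrow> bool" where
  "proper_closed_convex \<psi> \<longleftrightarrow>
     (\<forall>x. \<psi> x \<noteq> -\<infinity>) \<and> (\<exists>x. \<psi> x \<noteq> \<infinity>) \<and>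
     (\<forall>x y. \<forall>t::real. 0 \<le> t \<and> t \<le> 1 \<longrightarrow>
        \<psi> ((1 - t) *\<^sub>R x + t *\<^sub>R y) \<le> ereal (1 - t) * \<psi> x + ereal t * \<psi> y) \<and>
     (\<forall>c::real. closed {x. \<psi> x \<le> ereal c})"

end

theory Submission
  imports Defs
begin

text \<open>Let p_i be the inner iterates of epoch k, s = sigma_k and Lambda = L_1 + ... + L_n.
  By the descent lemma, B_{f_{s_i}}(x_{k+1}, p_i) <= L_{s_i} (|x_{k+1} - x_k|^2 + |x_k - p_i|^2),
  and x_k - p_i is eta times the sum of the gradients used before step i. Split each of them as
  (grad f_{s_j}(p_j) - grad f_{s_j}(z)) + (grad f_{s_j}(z) - grad f_{s_j}(x_*)) + grad f_{s_j}(x_*):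
  by Cauchy-Schwarz with weights L_{s_j} and cocoercivity |grad g(v) - grad g(u)|^2 <= 2 L B_g(v, u),
  the first two partial sums are bounded by Lambda times the sums of the divergences
  B_{f_{s_j}}(z, p_j) and B_{f_j}(z, x_*). The step size gives 4 eta^2 Lambda^2 <= 1, so the
  divergences B_{f_{s_j}}(z, p_j) are absorbed by the subtracted terms. Neither the proximal step
  nor the optimality of x_* enters: the bound holds for arbitrary points x_{k+1} and x_*.\<close>

lemma has_field_derivative_along_line:
  fixes g :: "'a::real_inner \<Rightarrow> real"
  assumes "\<And>w. (g has_derivative (\<lambda>h. inner (dg w) h)) (at w)"
  shows "((\<lambda>t. g (u + t *\<^sub>R d)) has_field_derivative inner (dg (u + t *\<^sub>R d)) d) (at t within S)"
proof -
  have "((\<lambda>t. u + t *\<^sub>R d) has_derivative (\<lambda>s. s *\<^sub>R d)) (at t within S)"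
    by (auto intro!: derivative_eq_intros)
  from has_derivative_compose[OF this assms]
  show ?thesis
    by (rule has_derivative_imp_has_field_derivative) (simp add: algebra_simps)
qed

lemma bregman_le_of_lipschitz_gradient:
  fixes g :: "'a::real_inner \<Rightarrow> real"
  assumes gd: "\<And>w. (g has_derivative (\<lambda>h. inner (dg w) h)) (at w)"
    and lip: "\<And>a b. norm (dg a - dg b) \<le> L * norm (a - b)"
  shows "bregman g dg v u \<le> L / 2 * (norm (v - u))\<^sup>2"
proof -
  define d where "d = v - u"
  define h where "h t = g (u + t *\<^sub>R d) - t * inner (dg u) d - L / 2 * t\<^sup>2 * (norm d)\<^sup>2" for t
  define h' where "h' t = inner (dg (u + t *\<^sub>R d)) d - inner (dg u) d - L * t * (norm d)\<^sup>2" for t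
  have "(h has_field_derivative h' t) (at t)" for t
    unfolding h_def h'_def
    by (rule has_field_derivative_along_line[OF gd] derivative_eq_intros refl
        | simp add: power2_eq_square algebra_simps)+
  then obtain t where t: "0 < t" "t < 1" "h 1 - h 0 = h' t"
    using MVT2[of 0 1 h h'] by auto
  have "h' t = inner (dg (u + t *\<^sub>R d) - dg u) d - L * t * (norm d)\<^sup>2"
    by (simp add: h'_def inner_diff_left)
  also have "\<dots> \<le> norm (dg (u + t *\<^sub>R d) - dg u) * norm d - L * t * (norm d)\<^sup>2"
    using norm_cauchy_schwarz by simp
  also have "\<dots> \<le> L * norm (t *\<^sub>R d) * norm d - L * t * (norm d)\<^sup>2"
    using lip[of "u + t *\<^sub>R d" u] by (simp add: mult_right_mono)
  also have "\<dots> = 0"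
    using t by (simp add: power2_eq_square)
  finally have "h 1 \<le> h 0"
    using t by simp
  then show ?thesis
    by (simp add: h_def d_def bregman_def)
qed

lemma bregman_nonneg_of_convex:
  fixes g :: "'a::real_inner \<Rightarrow> real"
  assumes cv: "convex_on UNIV g"
    and gd: "\<And>w. (g has_derivative (\<lambda>h. inner (dg w) h)) (at w)"
  shows "0 \<le> bregman g dg v u"
proof -
  define d where "d = v - u"
  define h where "h t = g (u + t *\<^sub>R d)" for t
  have "convex_on UNIV h"
    unfolding convex_on_def
  proof (intro conjI ballI allI impI, simp)
    fix x y a b :: real
    assume ab: "a \<ge> 0" "b \<ge> 0" "a + b = 1"
    have "u + (a *\<^sub>R x + b *\<^sub>R y) *\<^sub>R d = a *\<^sub>R (u + x *\<^sub>R d) + b *\<^sub>R (u + y *\<^sub>R d)"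
      using ab by (simp add: algebra_simps flip: scaleR_add_left)
    then show "h (a *\<^sub>R x + b *\<^sub>R y) \<le> a * h x + b * h y"
      using cv ab unfolding convex_on_def h_def by simp
  qed
  moreover have "(h has_field_derivative inner (dg u) d) (at 0 within UNIV)"
    using has_field_derivative_along_line[OF gd, of u d 0 UNIV] unfolding h_def by simp
  ultimately have "inner (dg u) d \<le> h 1 - h 0"
    using convex_on_imp_above_tangent[of UNIV h 0 1] by simp
  then show ?thesis
    by (simp add: h_def d_def bregman_def)
qed

text \<open>Compare B_g(w, u) >= 0 with the descent bound for B_g(w, v) at the gradient step
  w = v - (grad g(v) - grad g(u)) / L.\<close>

lemma norm_gradient_diff_sq_le_bregman:
  fixes g :: "'a::real_inner \<Rightarrow> real"
  assumes cv: "convex_on UNIV g"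
    and gd: "\<And>w. (g has_derivative (\<lambda>h. inner (dg w) h)) (at w)"
    and lip: "\<And>a b. norm (dg a - dg b) \<le> L * norm (a - b)"
    and L: "L > 0"
  shows "(norm (dg v - dg u))\<^sup>2 \<le> 2 * L * bregman g dg v u"
proof -
  define q where "q = dg v - dg u"
  define w where "w = v - (1 / L) *\<^sub>R q"
  have "0 \<le> bregman g dg w u"
    by (rule bregman_nonneg_of_convex[OF cv gd])
  moreover have "bregman g dg w v \<le> L / 2 * (norm (w - v))\<^sup>2"
    by (rule bregman_le_of_lipschitz_gradient[OF gd lip])
  moreover have "bregman g dg w u - bregman g dg w v = bregman g dg v u + inner q (w - v)"
    by (simp add: q_def bregman_def inner_diff_left inner_diff_right algebra_simps)
  moreover have "inner q (w - v) = - (norm q)\<^sup>2 / L"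
    by (simp add: w_def power2_norm_eq_inner)
  moreover have "L / 2 * (norm (w - v))\<^sup>2 = (norm q)\<^sup>2 / (2 * L)"
    using L by (simp add: w_def power2_eq_square)
  moreover have "(norm q)\<^sup>2 / L - (norm q)\<^sup>2 / (2 * L) = (norm q)\<^sup>2 / (2 * L)"
    by simp
  ultimately have "(norm q)\<^sup>2 / (2 * L) \<le> bregman g dg v u"
    by linarith
  then show ?thesis
    using L by (simp add: q_def field_simps)
qed

lemma bregman_average:
  fixes g :: "nat \<Rightarrow> 'a::real_inner \<Rightarrow> real"
  shows "bregman (\<lambda>u. (\<Sum>i\<in>I. g i u) / c) (\<lambda>u. (1 / c) *\<^sub>R (\<Sum>i\<in>I. dg i u)) v u
    = (\<Sum>i\<in>I. bregman (g i) (dg i) v u) / c"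
  by (simp add: bregman_def inner_sum_left sum_subtractf diff_divide_distrib)

lemma norm_sum_sq_le_weighted:
  fixes v :: "nat \<Rightarrow> 'a::real_normed_vector"
  assumes fin: "finite I" and JI: "J \<subseteq> I" and w: "\<And>j. j \<in> I \<Longrightarrow> w j > 0"
  shows "(norm (\<Sum>j\<in>J. v j))\<^sup>2 \<le> (\<Sum>j\<in>I. w j) * (\<Sum>j\<in>I. (norm (v j))\<^sup>2 / w j)"
proof -
  have wJ: "j \<in> J \<Longrightarrow> w j > 0" for j
    using w JI by auto
  have "norm (\<Sum>j\<in>J. v j) \<le> (\<Sum>j\<in>J. norm (v j))"
    by (rule norm_sum)
  also have "\<dots> = (\<Sum>j\<in>J. sqrt (w j) * (norm (v j) / sqrt (w j)))"
    using wJ by (intro sum.cong) force+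
  finally have "(norm (\<Sum>j\<in>J. v j))\<^sup>2 \<le> (\<Sum>j\<in>J. sqrt (w j) * (norm (v j) / sqrt (w j)))\<^sup>2"
    by (rule power_mono) simp
  also have "\<dots> \<le> (\<Sum>j\<in>J. (sqrt (w j))\<^sup>2) * (\<Sum>j\<in>J. (norm (v j) / sqrt (w j))\<^sup>2)"
    by (rule Cauchy_Schwarz_ineq_sum)
  also have "\<dots> = (\<Sum>j\<in>J. w j) * (\<Sum>j\<in>J. (norm (v j))\<^sup>2 / w j)"
    using wJ by (simp add: power_divide less_imp_le)
  also have "\<dots> \<le> (\<Sum>j\<in>I. w j) * (\<Sum>j\<in>I. (norm (v j))\<^sup>2 / w j)"
    using fin JI w wJ
    by (intro mult_mono sum_mono2 sum_nonneg) (auto simp: less_imp_le)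
  finally show ?thesis .
qed

lemma norm_add_sq_le:
  fixes a b :: "'a::real_normed_vector"
  shows "(norm (a + b))\<^sup>2 \<le> 2 * (norm a)\<^sup>2 + 2 * (norm b)\<^sup>2"
proof -
  have "(norm (a + b))\<^sup>2 \<le> (norm a + norm b)\<^sup>2"
    by (rule power_mono[OF norm_triangle_ineq]) simp
  also have "\<dots> \<le> 2 * (norm a)\<^sup>2 + 2 * (norm b)\<^sup>2"
    using sum_squares_ge_zero[of "norm a - norm b" 0] by (simp add: power2_eq_square algebra_simps)
  finally show ?thesis .
qed

lemma norm_add3_sq_le:
  fixes a b c :: "'a::real_normed_vector"
  shows "(norm (a + b + c))\<^sup>2 \<le> 2 * (norm a)\<^sup>2 + 4 * (norm b)\<^sup>2 + 4 * (norm c)\<^sup>2"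
  using norm_add_sq_le[of a "b + c"] norm_add_sq_le[of b c] by (simp add: add.assoc)

lemma two_mul_le_one_of_le_inverse_sqrt:
  fixes e m a b :: real
  assumes "0 \<le> e" "0 < m" "0 < a" "a \<le> b" "e \<le> 1 / (2 * m * sqrt (a * b))"
  shows "2 * e * (m * a) \<le> 1"
proof -
  have "a \<le> sqrt (a * b)"
    using assms by (intro real_le_rsqrt) (simp add: power2_eq_square)
  then have "2 * e * (m * a) \<le> e * (2 * m * sqrt (a * b))"
    using assms by (simp add: mult_left_mono)
  also have "\<dots> \<le> 1"
    using assms by (simp add: le_divide_eq mult.commute)
  finally show ?thesis .
qed

lemma iterate_displacement:
  fixes p :: "nat \<Rightarrow> 'a::real_vector"
  assumes step: "\<And>i. i \<in> {1..n} \<Longrightarrow> p (Suc i) = p i - e *\<^sub>R G i (p i)"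
    and i: "i \<in> {1..Suc n}"
  shows "p 1 - p i = e *\<^sub>R (\<Sum>j=1..<i. G j (p j))"
proof -
  have "1 \<le> i" "i \<le> Suc n"
    using i by auto
  then show ?thesis
  proof (induction i rule: dec_induct)
    case base
    then show ?case by simp
  next
    case (step i)
    then show ?case
      using assms(1)[of i] by (simp add: algebra_simps)
  qed
qed

lemma sum_norm_prefix_sums_from_two:
  fixes v :: "nat \<Rightarrow> 'a::real_normed_vector"
  shows "(\<Sum>i=1..n. w i * (norm (\<Sum>j=1..<i. v j))\<^sup>2) = (\<Sum>i=2..n. w i * (norm (\<Sum>j=1..i-1. v j))\<^sup>2)"
proof -
  have "(\<Sum>i=1..n. w i * (norm (\<Sum>j=1..<i. v j))\<^sup>2) = (\<Sum>i=2..n. w i * (norm (\<Sum>j=1..<i. v j))\<^sup>2)"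
    by (cases n) (simp_all add: sum.atLeast_Suc_atMost numeral_2_eq_2)
  also have "\<dots> = (\<Sum>i=2..n. w i * (norm (\<Sum>j=1..i-1. v j))\<^sup>2)"
    by (intro sum.cong refl arg_cong[where f = "\<lambda>S. w _ * (norm (sum v S))\<^sup>2"]) auto
  finally show ?thesis .
qed

locale smooth_convex_family =
  fixes n :: nat
    and f :: "nat \<Rightarrow> 'a::real_inner \<Rightarrow> real"
    and gradf :: "nat \<Rightarrow> 'a \<Rightarrow> 'a"
    and L :: "nat \<Rightarrow> real"
  assumes convex: "\<And>i. i \<in> {1..n} \<Longrightarrow> convex_on UNIV (f i)"
    and gradient: "\<And>i u. i \<in> {1..n} \<Longrightarrow> (f i has_derivative (\<lambda>h. inner (gradf i u) h)) (at u)"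
    and L_pos: "\<And>i. i \<in> {1..n} \<Longrightarrow> L i > 0"
    and lipschitz: "\<And>i u v. i \<in> {1..n} \<Longrightarrow> norm (gradf i u - gradf i v) \<le> L i * norm (u - v)"

lemma (in smooth_convex_family) sum_L_nonneg: "0 \<le> (\<Sum>i=1..n. L i)"
  using L_pos by (intro sum_nonneg) (simp add: less_imp_le)

locale shuffling_epoch = smooth_convex_family +
  fixes s :: "nat \<Rightarrow> nat"
    and e :: real
    and p :: "nat \<Rightarrow> 'a::real_inner"
  assumes permutation: "s permutes {1..n}"
    and step: "\<And>i. i \<in> {1..n} \<Longrightarrow> p (Suc i) = p i - e *\<^sub>R gradf (s i) (p i)"
begin

lemma permuted_index: "j \<in> {1..n} \<Longrightarrow> s j \<in> {1..n}"
  using permutes_in_image[OF permutation] by simp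

lemma sum_permuted: "(\<Sum>j=1..n. g (s j)) = (\<Sum>i=1..n. g i)"
  using sum.permute[OF permutation, of g] by simp

lemma norm_sum_gradient_diff_sq_le:
  assumes "J \<subseteq> {1..n}"
  shows "(norm (\<Sum>j\<in>J. gradf (s j) z - gradf (s j) (q j)))\<^sup>2
    \<le> 2 * (\<Sum>i=1..n. L i) * (\<Sum>j=1..n. bregman (f (s j)) (gradf (s j)) z (q j))"
proof -
  have "(norm (\<Sum>j\<in>J. gradf (s j) z - gradf (s j) (q j)))\<^sup>2
      \<le> (\<Sum>j=1..n. L (s j)) * (\<Sum>j=1..n. (norm (gradf (s j) z - gradf (s j) (q j)))\<^sup>2 / L (s j))"
    using assms L_pos permuted_index by (intro norm_sum_sq_le_weighted) auto
  also have "\<dots> \<le> (\<Sum>i=1..n. L i) * (\<Sum>j=1..n. 2 * bregman (f (s j)) (gradf (s j)) z (q j))"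
    unfolding sum_permuted[of L]
  proof (intro mult_left_mono sum_mono)
    fix j
    assume j: "j \<in> {1..n}"
    note sj = permuted_index[OF j]
    have "(norm (gradf (s j) z - gradf (s j) (q j)))\<^sup>2 \<le> 2 * L (s j) * bregman (f (s j)) (gradf (s j)) z (q j)"
      using convex[OF sj] gradient[OF sj] lipschitz[OF sj] L_pos[OF sj]
      by (rule norm_gradient_diff_sq_le_bregman)
    then show "(norm (gradf (s j) z - gradf (s j) (q j)))\<^sup>2 / L (s j) \<le> 2 * bregman (f (s j)) (gradf (s j)) z (q j)"
      using L_pos[OF sj] by (simp add: divide_simps mult.commute mult.left_commute)
  next
    show "0 \<le> (\<Sum>i=1..n. L i)"
      by (rule sum_L_nonneg)
  qed
  finally show ?thesis
    by (simp only: sum_distrib_left[symmetric] mult.assoc mult.left_commute[of 2])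
qed

lemma norm_displacement_sq_le:
  assumes i: "i \<in> {1..n}"
  shows "(norm (p 1 - p i))\<^sup>2 \<le> e\<^sup>2 * (4 * (\<Sum>i=1..n. L i) * (\<Sum>j=1..n. bregman (f (s j)) (gradf (s j)) z (p j))
      + 8 * (\<Sum>i=1..n. L i) * (\<Sum>j=1..n. bregman (f j) (gradf j) z xstar)
      + 4 * (norm (\<Sum>j=1..<i. gradf (s j) xstar))\<^sup>2)"
proof -
  define A where "A = (\<Sum>j=1..<i. gradf (s j) z - gradf (s j) (p j))"
  define B where "B = (\<Sum>j=1..<i. gradf (s j) z - gradf (s j) xstar)"
  define C where "C = (\<Sum>j=1..<i. gradf (s j) xstar)"
  have J: "{1..<i} \<subseteq> {1..n}"
    using i by auto
  have "p 1 - p i = e *\<^sub>R (\<Sum>j=1..<i. gradf (s j) (p j))"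
    using i by (intro iterate_displacement[where G = "\<lambda>j. gradf (s j)"] step) auto
  also have "(\<Sum>j=1..<i. gradf (s j) (p j)) = - A + B + C"
    by (simp add: A_def B_def C_def sum_subtractf)
  finally have "(norm (p 1 - p i))\<^sup>2 = e\<^sup>2 * (norm (- A + B + C))\<^sup>2"
    by (simp add: power_mult_distrib)
  also have "\<dots> \<le> e\<^sup>2 * (2 * (norm A)\<^sup>2 + 4 * (norm B)\<^sup>2 + 4 * (norm C)\<^sup>2)"
    using norm_add3_sq_le[of "- A" B C] by (simp add: mult_left_mono)
  also have "\<dots> \<le> e\<^sup>2 * (4 * (\<Sum>i=1..n. L i) * (\<Sum>j=1..n. bregman (f (s j)) (gradf (s j)) z (p j))
      + 8 * (\<Sum>i=1..n. L i) * (\<Sum>j=1..n. bregman (f j) (gradf j) z xstar)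
      + 4 * (norm C)\<^sup>2)"
    using norm_sum_gradient_diff_sq_le[OF J, of z p]
      norm_sum_gradient_diff_sq_le[OF J, of z "\<lambda>_. xstar"]
    unfolding A_def B_def sum_permuted[of "\<lambda>j. bregman (f j) (gradf j) z xstar"]
    by (intro mult_left_mono) auto
  finally show ?thesis
    by (simp add: C_def)
qed

lemma bregman_at_iterate_le:
  assumes i: "i \<in> {1..n}"
  shows "bregman (f (s i)) (gradf (s i)) x' (p i) \<le> L (s i) * (norm (x' - p 1))\<^sup>2 + L (s i) * (norm (p 1 - p i))\<^sup>2"
proof -
  note si = permuted_index[OF i]
  have "bregman (f (s i)) (gradf (s i)) x' (p i) \<le> L (s i) / 2 * (norm ((x' - p 1) + (p 1 - p i)))\<^sup>2"
    using bregman_le_of_lipschitz_gradient[OF gradient[OF si] lipschitz[OF si]] by simp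
  also have "\<dots> \<le> L (s i) / 2 * (2 * (norm (x' - p 1))\<^sup>2 + 2 * (norm (p 1 - p i))\<^sup>2)"
    using L_pos[OF si] by (intro mult_left_mono norm_add_sq_le) simp
  finally show ?thesis
    by (simp add: algebra_simps)
qed

lemma bregman_sum_le:
  assumes e: "0 \<le> e" "2 * e * (\<Sum>i=1..n. L i) \<le> 1"
  shows "(\<Sum>i=1..n. bregman (f (s i)) (gradf (s i)) x' (p i) - bregman (f (s i)) (gradf (s i)) z (p i))
    \<le> (\<Sum>i=1..n. L i) * (norm (x' - p 1))\<^sup>2
      + 8 * e\<^sup>2 * (\<Sum>i=1..n. L i)\<^sup>2 * (\<Sum>i=1..n. bregman (f i) (gradf i) z xstar)
      + 4 * e\<^sup>2 * (\<Sum>i=2..n. L (s i) * (norm (\<Sum>j=1..i-1. gradf (s j) xstar))\<^sup>2)"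
proof -
  define \<Lambda> where "\<Lambda> = (\<Sum>i=1..n. L i)"
  define A where "A = (\<Sum>j=1..n. bregman (f (s j)) (gradf (s j)) z (p j))"
  define B where "B = (\<Sum>i=1..n. bregman (f i) (gradf i) z xstar)"
  define C where "C i = (norm (\<Sum>j=1..<i. gradf (s j) xstar))\<^sup>2" for i
  define X where "X = (norm (x' - p 1))\<^sup>2"
  have term_le: "bregman (f (s i)) (gradf (s i)) x' (p i)
      \<le> L (s i) * X + L (s i) * (e\<^sup>2 * (4 * \<Lambda> * A + 8 * \<Lambda> * B)) + 4 * e\<^sup>2 * (L (s i) * C i)"
    if i: "i \<in> {1..n}" for i
  proof -
    have "L (s i) * (norm (p 1 - p i))\<^sup>2 \<le> L (s i) * (e\<^sup>2 * (4 * \<Lambda> * A + 8 * \<Lambda> * B + 4 * C i))"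
      using norm_displacement_sq_le[OF i, of z xstar] L_pos[OF permuted_index[OF i]]
      by (intro mult_left_mono) (simp_all add: \<Lambda>_def A_def B_def C_def)
    with bregman_at_iterate_le[OF i, of x'] show ?thesis
      by (simp add: X_def algebra_simps)
  qed
  have "(\<Sum>i=1..n. bregman (f (s i)) (gradf (s i)) x' (p i))
      \<le> (\<Sum>i=1..n. L (s i) * X + L (s i) * (e\<^sup>2 * (4 * \<Lambda> * A + 8 * \<Lambda> * B)) + 4 * e\<^sup>2 * (L (s i) * C i))"
    using term_le by (rule sum_mono)
  also have "\<dots> = (\<Sum>i=1..n. L (s i)) * X + (\<Sum>i=1..n. L (s i)) * (e\<^sup>2 * (4 * \<Lambda> * A + 8 * \<Lambda> * B))
      + 4 * e\<^sup>2 * (\<Sum>i=1..n. L (s i) * C i)"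
    by (simp only: sum.distrib sum_distrib_left[symmetric] sum_distrib_right[symmetric])
  also have "\<dots> = \<Lambda> * X + 4 * e\<^sup>2 * \<Lambda>\<^sup>2 * A + 8 * e\<^sup>2 * \<Lambda>\<^sup>2 * B + 4 * e\<^sup>2 * (\<Sum>i=1..n. L (s i) * C i)"
    unfolding sum_permuted[of L] \<Lambda>_def by (simp add: power2_eq_square algebra_simps)
  also have "4 * e\<^sup>2 * \<Lambda>\<^sup>2 * A \<le> A"
  proof -
    have "4 * e\<^sup>2 * \<Lambda>\<^sup>2 = (2 * e * \<Lambda>)\<^sup>2"
      by (simp add: power_mult_distrib)
    also have "\<dots> \<le> 1"
      using e sum_L_nonneg by (simp add: \<Lambda>_def abs_square_le_1)
    moreover have "0 \<le> A"
      unfolding A_def using permuted_index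
      by (intro sum_nonneg bregman_nonneg_of_convex convex gradient) auto
    ultimately show ?thesis
      by (simp add: mult_left_le_one_le)
  qed
  also have "(\<Sum>i=1..n. L (s i) * C i) = (\<Sum>i=2..n. L (s i) * (norm (\<Sum>j=1..i-1. gradf (s j) xstar))\<^sup>2)"
    unfolding C_def by (rule sum_norm_prefix_sums_from_two)
  finally show ?thesis
    by (simp add: sum_subtractf \<Lambda>_def A_def B_def X_def)
qed

end

theorem mainTheorem7:
  fixes n K :: nat
    and f :: "nat \<Rightarrow> 'a::euclidean_space \<Rightarrow> real"
    and gradf :: "nat \<Rightarrow> 'a \<Rightarrow> 'a"
    and L :: "nat \<Rightarrow> real"
    and \<psi> :: "'a \<Rightarrow> ereal"
    and x :: "nat \<Rightarrow> 'a"
    and y :: "nat \<Rightarrow> nat \<Rightarrow> 'a"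
    and \<sigma> :: "nat \<Rightarrow> nat \<Rightarrow> nat"
    and \<eta> :: "nat \<Rightarrow> real"
    and xstar z :: 'a
    and k :: nat
  assumes n_pos: "n \<ge> 1"
    and K_ge: "K \<ge> 2"
    and f_convex: "\<And>i. i \<in> {1..n} \<Longrightarrow> convex_on UNIV (f i)"
    and f_grad: "\<And>i u. i \<in> {1..n} \<Longrightarrow> (f i has_derivative (\<lambda>h. inner (gradf i u) h)) (at u)"
    and L_pos: "\<And>i. i \<in> {1..n} \<Longrightarrow> L i > 0"
    and f_smooth: "\<And>i u v. i \<in> {1..n} \<Longrightarrow> norm (gradf i u - gradf i v) \<le> L i * norm (u - v)"
    and psi: "proper_closed_convex \<psi>"
    and x1_dom: "\<psi> (x 1) \<noteq> \<infinity>"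
    and eta_pos: "\<And>k. k \<in> {1..K} \<Longrightarrow> \<eta> k > 0"
    and sigma_perm: "\<And>k. k \<in> {1..K} \<Longrightarrow> \<sigma> k permutes {1..n}"
    and inner_start: "\<And>k. k \<in> {1..K} \<Longrightarrow> y k 1 = x k"
    and inner_step: "\<And>k i. k \<in> {1..K} \<Longrightarrow> i \<in> {1..n} \<Longrightarrow>
        y k (Suc i) = y k i - \<eta> k *\<^sub>R gradf (\<sigma> k i) (y k i)"
    and prox_step: "\<And>k u. k \<in> {1..K} \<Longrightarrow>
        ereal (real n) * \<psi> (x (Suc k)) + ereal (norm (x (Suc k) - y k (Suc n))^2 / (2 * \<eta> k))
        \<le> ereal (real n) * \<psi> u + ereal (norm (u - y k (Suc n))^2 / (2 * \<eta> k))"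
    and xstar_min: "ereal ((\<Sum>i=1..n. f i xstar) / real n) + \<psi> xstar
        = (INF u. ereal ((\<Sum>i=1..n. f i u) / real n) + \<psi> u)"
    and inf_finite: "(INF u. ereal ((\<Sum>i=1..n. f i u) / real n) + \<psi> u) \<noteq> \<infinity> \<and> (INF u. ereal ((\<Sum>i=1..n. f i u) / real n) + \<psi> u) \<noteq> -\<infinity>"
    and eta_bound: "\<And>k. k \<in> {1..K} \<Longrightarrow>
        \<eta> k \<le> 1 / (2 * real n * sqrt (((\<Sum>i=1..n. L i) / real n) * Max (L ` {1..n})))"
    and k_range: "k \<in> {1..K}"
  shows "(1 / real n) * (\<Sum>i=1..n.
            bregman (f (\<sigma> k i)) (gradf (\<sigma> k i)) (x (Suc k)) (y k i)
          - bregman (f (\<sigma> k i)) (gradf (\<sigma> k i)) z (y k i))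
      \<le> ((\<Sum>i=1..n. L i) / real n) * (norm (x (Suc k) - x k))^2
        + 8 * (\<eta> k)^2 * (real n)^2 * ((\<Sum>i=1..n. L i) / real n)^2
            * bregman (\<lambda>u. (\<Sum>i=1..n. f i u) / real n) (\<lambda>u. (1 / real n) *\<^sub>R (\<Sum>i=1..n. gradf i u)) z xstar
        + 4 * (\<eta> k)^2 * (\<Sum>i=2..n. L (\<sigma> k i) / real n * (norm (\<Sum>j=1..i-1. gradf (\<sigma> k j) xstar))^2)"
proof -
  interpret shuffling_epoch n f gradf L "\<sigma> k" "\<eta> k" "y k"
    using f_convex f_grad L_pos f_smooth sigma_perm[OF k_range] inner_step[OF k_range]
    by unfold_locales auto
  have n: "0 < real n"
    using n_pos by simp
  have \<Lambda>: "0 < (\<Sum>i=1..n. L i)"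
    using n_pos L_pos by (intro sum_pos) auto
  have "(\<Sum>i=1..n. L i) \<le> real n * Max (L ` {1..n})"
    using sum_bounded_above[of "{1..n}" L "Max (L ` {1..n})"] by simp
  then have "(\<Sum>i=1..n. L i) / real n \<le> Max (L ` {1..n})"
    using n by (simp add: divide_le_eq mult.commute)
  then have "2 * \<eta> k * (real n * ((\<Sum>i=1..n. L i) / real n)) \<le> 1"
    using eta_pos[OF k_range] eta_bound[OF k_range] n \<Lambda>
    by (intro two_mul_le_one_of_le_inverse_sqrt[where b = "Max (L ` {1..n})"]) auto
  then have "(\<Sum>i=1..n. bregman (f (\<sigma> k i)) (gradf (\<sigma> k i)) (x (Suc k)) (y k i)
        - bregman (f (\<sigma> k i)) (gradf (\<sigma> k i)) z (y k i))
      \<le> (\<Sum>i=1..n. L i) * (norm (x (Suc k) - x k))\<^sup>2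
        + 8 * (\<eta> k)\<^sup>2 * (\<Sum>i=1..n. L i)\<^sup>2 * (\<Sum>i=1..n. bregman (f i) (gradf i) z xstar)
        + 4 * (\<eta> k)\<^sup>2 * (\<Sum>i=2..n. L (\<sigma> k i) * (norm (\<Sum>j=1..i-1. gradf (\<sigma> k j) xstar))\<^sup>2)"
    using bregman_sum_le[of "x (Suc k)" z xstar] eta_pos[OF k_range] inner_start[OF k_range] n by simp
  from divide_right_mono[OF this, of "real n"] n show ?thesis
    by (simp add: bregman_average sum_divide_distrib[symmetric] field_simps power2_eq_square)
qed

end
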